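(* For any connected graphs $G$ and $H$, $v_s(G)\,v_s(H) \le Z(G \Box H)$.
   Context: A strong support vertex is a vertex adjacent to at least two leaves; $v_s(G)$ is the number of strong support vertices of $G$. Zero forcing: starting from a set $Z \subseteq V(G)$ of observed vertices, repeatedly any vertex that is the only unobserved neighbor of some observed vertex becomes observed; $Z$ is a zero forcing set if eventually all vertices are observed, and $Z(G)$ is the minimum size of a zero forcing set. $G\Box H$ is the Cartesian product: vertex set $V(G)\times V(H)$, with $(g_1,h_1)\sim(g_2,h_2)$ iff ($g_1=g_2$ and $h_1h_2\in E(H)$) or ($h_1=h_2$ and $g_1g_2\in E(G)$). *)

theory Defs
  imports Main
begin

definition graph :: "'a set \<Rightarrow> ('a \<Rightarrow> 'a \<Rightarrow> bool) \<Rightarrow> bool" where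
  "graph V E \<longleftrightarrow> finite V \<and> V \<noteq> {} \<and>
     (\<forall>x y. E x y \<longrightarrow> x \<in> V \<and> y \<in> V \<and> x \<noteq> y \<and> E y x)"

definition connected_graph :: "'a set \<Rightarrow> ('a \<Rightarrow> 'a \<Rightarrow> bool) \<Rightarrow> bool" where
  "connected_graph V E \<longleftrightarrow> graph V E \<and> (\<forall>x\<in>V. \<forall>y\<in>V. E\<^sup>*\<^sup>* x y)"

definition nbrs :: "'a set \<Rightarrow> ('a \<Rightarrow> 'a \<Rightarrow> bool) \<Rightarrow> 'a \<Rightarrow> 'a set" where
  "nbrs V E v = {u \<in> V. E v u}"

definition leaf :: "'a set \<Rightarrow> ('a \<Rightarrow> 'a \<Rightarrow> bool) \<Rightarrow> 'a \<Rightarrow> bool" where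
  "leaf V E v \<longleftrightarrow> v \<in> V \<and> card (nbrs V E v) = 1"

definition strong_support :: "'a set \<Rightarrow> ('a \<Rightarrow> 'a \<Rightarrow> bool) \<Rightarrow> 'a \<Rightarrow> bool" where
  "strong_support V E v \<longleftrightarrow> v \<in> V \<and> card {u \<in> nbrs V E v. leaf V E u} \<ge> 2"

definition num_strong_support :: "'a set \<Rightarrow> ('a \<Rightarrow> 'a \<Rightarrow> bool) \<Rightarrow> nat" where
  "num_strong_support V E = card {v \<in> V. strong_support V E v}"

inductive_set observed :: "'a set \<Rightarrow> ('a \<Rightarrow> 'a \<Rightarrow> bool) \<Rightarrow> 'a set \<Rightarrow> 'a set"
  for V E Z where
  init: "z \<in> Z \<Longrightarrow> z \<in> observed V E Z"
| force: "u \<in> observed V E Z \<Longrightarrow> w \<in> nbrs V E u \<Longrightarrow>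
           (\<And>x. x \<in> nbrs V E u \<Longrightarrow> x \<noteq> w \<Longrightarrow> x \<in> observed V E Z) \<Longrightarrow>
           w \<in> observed V E Z"

definition zero_forcing_set :: "'a set \<Rightarrow> ('a \<Rightarrow> 'a \<Rightarrow> bool) \<Rightarrow> 'a set \<Rightarrow> bool" where
  "zero_forcing_set V E Z \<longleftrightarrow> Z \<subseteq> V \<and> V \<subseteq> observed V E Z"

definition zero_forcing_number :: "'a set \<Rightarrow> ('a \<Rightarrow> 'a \<Rightarrow> bool) \<Rightarrow> nat" where
  "zero_forcing_number V E = (LEAST k. \<exists>Z. zero_forcing_set V E Z \<and> card Z = k)"

definition cart_adj :: "'a set \<Rightarrow> ('a \<Rightarrow> 'a \<Rightarrow> bool) \<Rightarrow> 'b set \<Rightarrow> ('b \<Rightarrow> 'b \<Rightarrow> bool)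
    \<Rightarrow> ('a \<times> 'b) \<Rightarrow> ('a \<times> 'b) \<Rightarrow> bool" where
  "cart_adj V1 E1 V2 E2 p q \<longleftrightarrow>
     (fst p = fst q \<and> fst p \<in> V1 \<and> E2 (snd p) (snd q)) \<or>
     (snd p = snd q \<and> snd p \<in> V2 \<and> E1 (fst p) (fst q))"

end

theory Submission
  imports Defs "HOL-Library.Disjoint_Sets"
begin

text \<open>Every zero forcing set meets every fort, i.e. every nonempty set of vertices such that
  no vertex outside it has exactly one neighbour in it. For two strong support vertices
  \<open>s\<close> of \<open>G\<close> and \<open>t\<close> of \<open>H\<close>, the product of the leaves at \<open>s\<close> with the leaves at \<open>t\<close> is a fort
  of \<open>G \<box> H\<close>: a vertex adjacent to a leaf pair \<open>(a, b)\<close> is \<open>(a, t)\<close> or \<open>(s, b)\<close>, and it is then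
  also adjacent to \<open>(a, b')\<close> resp. \<open>(a', b)\<close> for a second leaf \<open>b'\<close> at \<open>t\<close> resp. \<open>a'\<close> at \<open>s\<close>.
  Since a leaf has only one neighbour, these forts are pairwise disjoint, so a zero forcing
  set contains at least one vertex from each of them.\<close>

definition fort :: "'a set \<Rightarrow> ('a \<Rightarrow> 'a \<Rightarrow> bool) \<Rightarrow> 'a set \<Rightarrow> bool" where
  "fort V E F \<longleftrightarrow> F \<noteq> {} \<and> F \<subseteq> V \<and>
     (\<forall>u \<in> V - F. \<forall>w \<in> nbrs V E u \<inter> F. \<exists>x \<in> nbrs V E u \<inter> F. x \<noteq> w)"

definition leaves_at :: "'a set \<Rightarrow> ('a \<Rightarrow> 'a \<Rightarrow> bool) \<Rightarrow> 'a \<Rightarrow> 'a set" where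
  "leaves_at V E s = {u \<in> nbrs V E s. leaf V E u}"

lemma disjoint_family_on_Times:
  assumes "disjoint_family_on A S" and "disjoint_family_on B T"
  shows "disjoint_family_on (\<lambda>(s, t). A s \<times> B t) (S \<times> T)"
  using assms unfolding disjoint_family_on_def by (clarsimp; blast)

lemma observed_subset:
  assumes "Z \<subseteq> V"
  shows "observed V E Z \<subseteq> V"
proof
  fix x assume "x \<in> observed V E Z"
  then show "x \<in> V"
  proof induction
    case (init z)
    with assms show ?case by blast
  next
    case (force u w)
    from force.hyps(2) show ?case by (simp add: nbrs_def)
  qed
qed

lemma observed_in_fort_imp_meets:
  assumes "fort V E F" and "Z \<subseteq> V"
  shows "x \<in> observed V E Z \<Longrightarrow> x \<in> F \<Longrightarrow> F \<inter> Z \<noteq> {}"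
proof (induction x rule: observed.induct)
  case (init z)
  then show ?case by blast
next
  case (force u w)
  show ?case
  proof (cases "u \<in> F")
    case True
    then show ?thesis using force.IH(1) by blast
  next
    case False
    have "u \<in> V" using force.hyps(1) observed_subset[OF assms(2)] by blast
    with False force.hyps(2) force.prems assms(1) obtain x where "x \<in> nbrs V E u" "x \<in> F" "x \<noteq> w"
      unfolding fort_def by blast
    then show ?thesis using force.IH(2) by blast
  qed
qed

lemma zero_forcing_set_meets_fort:
  assumes "zero_forcing_set V E Z" and "fort V E F"
  shows "F \<inter> Z \<noteq> {}"
proof -
  obtain w where "w \<in> F" "F \<subseteq> V" using assms(2) by (auto simp: fort_def)
  moreover have "V \<subseteq> observed V E Z" "Z \<subseteq> V" using assms(1) by (auto simp: zero_forcing_set_def)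
  ultimately show ?thesis using observed_in_fort_imp_meets[OF assms(2)] by blast
qed

lemma zero_forcing_number_ge:
  assumes "\<And>Z. zero_forcing_set V E Z \<Longrightarrow> k \<le> card Z"
  shows "k \<le> zero_forcing_number V E"
proof -
  have "zero_forcing_set V E V"
    unfolding zero_forcing_set_def by (auto intro: observed.init)
  then have "\<exists>k Z. zero_forcing_set V E Z \<and> card Z = k" by blast
  then obtain Z where "zero_forcing_set V E Z" "card Z = zero_forcing_number V E"
    unfolding zero_forcing_number_def by (rule exE[OF LeastI_ex]) blast
  with assms[of Z] show ?thesis by simp
qed

lemma card_le_if_meets_disjoint_family:
  assumes "finite Z" and "\<And>i. i \<in> I \<Longrightarrow> F i \<inter> Z \<noteq> {}" and "disjoint_family_on F I"
  shows "card I \<le> card Z"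
proof -
  define f where "f i = (SOME z. z \<in> F i \<inter> Z)" for i
  have f: "f i \<in> F i \<inter> Z" if "i \<in> I" for i
    using assms(2)[OF that] unfolding f_def by (meson ex_in_conv someI_ex)
  have "inj_on f I"
  proof (rule inj_onI)
    fix i j assume "i \<in> I" "j \<in> I" "f i = f j"
    then have "f i \<in> F i \<inter> F j" using f[of i] f[of j] by auto
    then show "i = j" using assms(3) \<open>i \<in> I\<close> \<open>j \<in> I\<close> by (auto simp: disjoint_family_on_def)
  qed
  then show ?thesis using f card_inj_on_le[OF _ _ assms(1)] by blast
qed

lemma strong_support_iff_leaves_at:
  "strong_support V E s \<longleftrightarrow> s \<in> V \<and> 2 \<le> card (leaves_at V E s)"
  by (simp add: strong_support_def leaves_at_def)

lemma leaf_nbrs: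
  assumes "graph V E" and "leaf V E l" and "E l s"
  shows "nbrs V E l = {s}"
proof -
  have "s \<in> nbrs V E l" using assms(1,3) by (auto simp: nbrs_def graph_def)
  moreover have "card (nbrs V E l) = 1" using assms(2) by (simp add: leaf_def)
  ultimately show ?thesis by (metis card_1_singletonE singletonD)
qed

lemma leaf_adj_unique:
  assumes "graph V E" and "leaf V E l" and "E l s" and "E l s'"
  shows "s = s'"
  using leaf_nbrs[OF assms(1,2,3)] leaf_nbrs[OF assms(1,2,4)] by simp

lemma leaves_at_adj:
  assumes "graph V E" and "a \<in> leaves_at V E s" and "E a y"
  shows "y = s"
  using assms leaf_adj_unique[of V E a y s]
  by (auto simp: leaves_at_def nbrs_def graph_def)

lemma disjoint_family_leaves_at:
  assumes "graph V E"
  shows "disjoint_family_on (leaves_at V E) S"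
  using assms leaves_at_adj[OF assms]
  by (fastforce simp: disjoint_family_on_def leaves_at_def nbrs_def graph_def)

lemma strong_support_other_leaf:
  assumes "strong_support V E s" and "a \<in> leaves_at V E s"
  obtains a' where "a' \<in> leaves_at V E s" "a' \<noteq> a"
proof -
  have "\<not> leaves_at V E s \<subseteq> {a}"
    using assms(1) card_mono[of "{a}" "leaves_at V E s"]
    by (auto simp: strong_support_iff_leaves_at)
  then show ?thesis using that by blast
qed

lemma fort_leaves_at_product:
  assumes G: "graph V1 E1" and H: "graph V2 E2"
    and s: "strong_support V1 E1 s" and t: "strong_support V2 E2 t"
  shows "fort (V1 \<times> V2) (cart_adj V1 E1 V2 E2) (leaves_at V1 E1 s \<times> leaves_at V2 E2 t)"
    (is "fort ?V ?E (?A \<times> ?B)")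
proof -
  have sub: "?A \<subseteq> nbrs V1 E1 s" "?B \<subseteq> nbrs V2 E2 t" by (auto simp: leaves_at_def)
  have ne: "?A \<noteq> {}" "?B \<noteq> {}"
    using s t by (auto simp: strong_support_iff_leaves_at)
  have sym: "E1 y x" if "E1 x y" for x y using that G by (auto simp: graph_def)
  have sym2: "E2 y x" if "E2 x y" for x y using that H by (auto simp: graph_def)
  have "\<exists>x \<in> nbrs ?V ?E u \<inter> ?A \<times> ?B. x \<noteq> w"
    if w: "w \<in> nbrs ?V ?E u \<inter> ?A \<times> ?B" for u w
  proof -
    obtain a b where ab: "w = (a, b)" "a \<in> ?A" "b \<in> ?B" and adj: "?E u (a, b)"
      using w by (auto simp: nbrs_def)
    from adj consider "fst u = a" "a \<in> V1" "E2 (snd u) b" | "snd u = b" "b \<in> V2" "E1 (fst u) a"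
      by (auto simp: cart_adj_def)
    then show ?thesis
    proof cases
      case 1
      then have "u = (a, t)" using leaves_at_adj[OF H ab(3) sym2] by (simp add: prod_eq_iff)
      obtain b' where "b' \<in> ?B" "b' \<noteq> b" using strong_support_other_leaf[OF t ab(3)] .
      then have "(a, b') \<in> nbrs ?V ?E u \<inter> ?A \<times> ?B"
        using \<open>u = (a, t)\<close> ab(2) sub 1 by (auto simp: nbrs_def cart_adj_def)
      then show ?thesis using \<open>b' \<noteq> b\<close> ab(1) by blast
    next
      case 2
      then have "u = (s, b)" using leaves_at_adj[OF G ab(2) sym] by (simp add: prod_eq_iff)
      obtain a' where "a' \<in> ?A" "a' \<noteq> a" using strong_support_other_leaf[OF s ab(2)] .
      then have "(a', b) \<in> nbrs ?V ?E u \<inter> ?A \<times> ?B"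
        using \<open>u = (s, b)\<close> ab(3) sub 2 by (auto simp: nbrs_def cart_adj_def)
      then show ?thesis using \<open>a' \<noteq> a\<close> ab(1) by blast
    qed
  qed
  moreover have "?A \<times> ?B \<subseteq> ?V" using sub by (auto simp: nbrs_def)
  moreover have "?A \<times> ?B \<noteq> {}" using ne by simp
  ultimately show ?thesis unfolding fort_def by blast
qed

theorem corollary3p6:
  fixes V1 :: "'a set" and E1 :: "'a \<Rightarrow> 'a \<Rightarrow> bool"
    and V2 :: "'b set" and E2 :: "'b \<Rightarrow> 'b \<Rightarrow> bool"
  assumes "connected_graph V1 E1" and "connected_graph V2 E2"
  shows "num_strong_support V1 E1 * num_strong_support V2 E2
           \<le> zero_forcing_number (V1 \<times> V2) (cart_adj V1 E1 V2 E2)"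
proof -
  have G: "graph V1 E1" and H: "graph V2 E2"
    using assms by (auto simp: connected_graph_def)
  define S1 where "S1 = {v \<in> V1. strong_support V1 E1 v}"
  define S2 where "S2 = {v \<in> V2. strong_support V2 E2 v}"
  define F where "F = (\<lambda>(s, t). leaves_at V1 E1 s \<times> leaves_at V2 E2 t)"
  have "card (S1 \<times> S2) \<le> card Z"
    if Z: "zero_forcing_set (V1 \<times> V2) (cart_adj V1 E1 V2 E2) Z" for Z
  proof (rule card_le_if_meets_disjoint_family)
    have "Z \<subseteq> V1 \<times> V2" using Z by (simp add: zero_forcing_set_def)
    moreover have "finite (V1 \<times> V2)" using G H by (simp add: graph_def)
    ultimately show "finite Z" by (rule finite_subset)
    show "F st \<inter> Z \<noteq> {}" if "st \<in> S1 \<times> S2" for st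
      using that zero_forcing_set_meets_fort[OF Z fort_leaves_at_product[OF G H]]
      by (auto simp: F_def S1_def S2_def)
    show "disjoint_family_on F (S1 \<times> S2)"
      unfolding F_def
      by (intro disjoint_family_on_Times disjoint_family_leaves_at G H)
  qed
  then have "card (S1 \<times> S2) \<le> zero_forcing_number (V1 \<times> V2) (cart_adj V1 E1 V2 E2)"
    by (rule zero_forcing_number_ge)
  then show ?thesis
    by (simp only: num_strong_support_def S1_def[symmetric] S2_def[symmetric] card_cartesian_product)
qed

end
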